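(* Let $X \subseteq {}^\omega 2$ with $|X| = \mathfrak{c}$. Then there exists $X' \subseteq X$ with $|X'| = \mathfrak{c}$ and $X' \in s_0$.
   Context: ${}^\omega 2$ is the Cantor space; $\mathfrak c=2^{\aleph_0}$. A set $Y \subseteq {}^\omega 2$ is Marczewski null ($Y \in s_0$) if for every perfect set $P \subseteq {}^\omega 2$ there is a perfect set $Q \subseteq P$ with $Q \cap Y = \emptyset$. *)

theory Defs
  imports "HOL-Analysis.Analysis" "HOL-Library.Equipollence"
begin

text \<open>Cantor space: nat \<Rightarrow> bool with the product topology (Function_Topology).
  A perfect set is a nonempty closed set without isolated points.\<close>

definition perfect_set :: "(nat \<Rightarrow> bool) set \<Rightarrow> bool" where
  "perfect_set P \<longleftrightarrow> P \<noteq> {} \<and> closed P \<and> (\<forall>x\<in>P. x islimpt P)"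

text \<open>Marczewski null sets (the ideal s_0).\<close>

definition marczewski_null :: "(nat \<Rightarrow> bool) set \<Rightarrow> bool" where
  "marczewski_null Y \<longleftrightarrow>
     (\<forall>P. perfect_set P \<longrightarrow> (\<exists>Q. perfect_set Q \<and> Q \<subseteq> P \<and> Q \<inter> Y = {}))"

end

(*
  If X is Marczewski null there is nothing to prove. Otherwise X meets every perfect subset of
  some perfect set P0, and pulling X back along a copy of Cantor space inside P0 we may assume that
  X meets every perfect set in continuum many points.

  Enumerate the perfect sets as P_a along a well-order of length continuum. At stage a choose a
  perfect Q_a inside P_a that avoids the points chosen so far and is thin: it meets every fibre of
  the projection x \<mapsto> (x (2k))_k, except possibly one, in at most one point. Then choose x_a in X
  outside all Q_b with b \<le> a. This is possible because fewer than continuum many thin sets miss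
  all but fewer than continuum many points of a fibre avoiding their exceptional fibres, while X
  meets that perfect fibre in continuum many points. The x_a are distinct, and Q_a misses all of
  them, so {x_a} is Marczewski null.
*)

theory Submission
  imports Defs
begin

unbundle cardinal_syntax

section \<open>Cantor space via finite agreement\<close>

definition agree :: "nat \<Rightarrow> (nat \<Rightarrow> bool) \<Rightarrow> (nat \<Rightarrow> bool) \<Rightarrow> bool" where
  "agree n x y \<longleftrightarrow> (\<forall>i<n. x i = y i)"

lemma agree_refl [simp]: "agree n x x"
  by (simp add: agree_def)

lemma agree_sym: "agree n x y \<Longrightarrow> agree n y x"
  by (simp add: agree_def)

lemma agree_trans: "agree n x y \<Longrightarrow> agree n y z \<Longrightarrow> agree n x z"
  by (simp add: agree_def)

lemma agree_mono: "agree n x y \<Longrightarrow> m \<le> n \<Longrightarrow> agree m x y"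
  by (simp add: agree_def)

lemma agree_all_iff: "(\<forall>n. agree n x y) \<longleftrightarrow> x = y"
  by (auto simp: agree_def fun_eq_iff)

lemma first_difference:
  assumes "\<not> agree n x y"
  obtains k where "k < n" "agree k x y" "x k \<noteq> y k"
proof -
  from assms obtain i where i: "i < n" "x i \<noteq> y i" by (auto simp: agree_def)
  define k where "k = (LEAST k. x k \<noteq> y k)"
  have "x k \<noteq> y k" unfolding k_def by (rule LeastI) (rule i(2))
  moreover have "k \<le> i" unfolding k_def by (rule Least_le) (rule i(2))
  moreover have "agree k x y" unfolding agree_def k_def using not_less_Least by blast
  ultimately show thesis using i(1) by (intro that) auto
qed

text \<open>Completeness of Cantor space.\<close>

lemma agree_diagonal:
  assumes "\<And>j k. j \<le> k \<Longrightarrow> agree (L j) (y j) (y k)" and "\<And>j. j \<le> L j"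
  shows "agree (L n) (y n) (\<lambda>i. y (Suc i) i)"
  unfolding agree_def
proof (intro allI impI)
  fix i assume "i < L n"
  define m where "m = max n (Suc i)"
  have "y n i = y m i"
    using assms(1)[of n m] \<open>i < L n\<close> by (simp add: m_def agree_def)
  moreover have "y (Suc i) i = y m i"
    using assms(1)[of "Suc i" m] assms(2)[of "Suc i"] by (simp add: m_def agree_def)
  ultimately show "y n i = y (Suc i) i" by simp
qed

definition cylinder :: "nat \<Rightarrow> (nat \<Rightarrow> bool) \<Rightarrow> (nat \<Rightarrow> bool) set" where
  "cylinder n x = {y. agree n x y}"

lemma open_cylinder: "open (cylinder n x)"
proof -
  have "open {f::nat \<Rightarrow> bool. \<forall>i\<in>{..<n}. f (id i) \<in> (\<lambda>i. {x i}) i}"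
    by (rule product_topology_basis') (auto intro: open_discrete)
  moreover have "{f::nat \<Rightarrow> bool. \<forall>i\<in>{..<n}. f (id i) \<in> (\<lambda>i. {x i}) i} = cylinder n x"
    by (auto simp: cylinder_def agree_def)
  ultimately show ?thesis by simp
qed

lemma open_contains_cylinder:
  assumes "open U" "x \<in> U"
  obtains n where "cylinder n x \<subseteq> U"
proof -
  have "openin (product_topology (\<lambda>i::nat. (euclidean::bool topology)) UNIV) U"
    using assms(1) by (simp add: open_fun_def)
  from product_topology_open_contains_basis[OF this assms(2)] obtain X where
    X: "x \<in> (\<Pi>\<^sub>E i\<in>UNIV. X i)" "finite {i. X i \<noteq> UNIV}" "(\<Pi>\<^sub>E i\<in>UNIV. X i) \<subseteq> U"
    by auto
  then obtain n where n: "{i. X i \<noteq> UNIV} \<subseteq> {..<n}"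
    by (auto simp: finite_nat_iff_bounded)
  have "cylinder n x \<subseteq> (\<Pi>\<^sub>E i\<in>UNIV. X i)"
  proof
    fix y assume "y \<in> cylinder n x"
    have "y i \<in> X i" for i
    proof (cases "i < n")
      case True
      then have "y i = x i" using \<open>y \<in> cylinder n x\<close> by (simp add: cylinder_def agree_def)
      with X(1) show ?thesis by (simp add: PiE_iff)
    next
      case False
      then show ?thesis using n by blast
    qed
    then show "y \<in> (\<Pi>\<^sub>E i\<in>UNIV. X i)" by (simp add: PiE_iff)
  qed
  with X(3) show thesis by (intro that) blast
qed

lemma closed_iff_agree: "closed S \<longleftrightarrow> (\<forall>x. (\<forall>n. \<exists>y\<in>S. agree n x y) \<longrightarrow> x \<in> S)"
proof
  assume "closed S"
  show "\<forall>x. (\<forall>n. \<exists>y\<in>S. agree n x y) \<longrightarrow> x \<in> S"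
  proof (intro allI impI, rule ccontr)
    fix x assume near: "\<forall>n. \<exists>y\<in>S. agree n x y" and "x \<notin> S"
    then obtain n where "cylinder n x \<subseteq> - S"
      using open_contains_cylinder[of "- S" x] \<open>closed S\<close> by (auto simp: closed_def)
    with near show False by (auto simp: cylinder_def)
  qed
next
  assume near: "\<forall>x. (\<forall>n. \<exists>y\<in>S. agree n x y) \<longrightarrow> x \<in> S"
  have "\<exists>T. open T \<and> x \<in> T \<and> T \<subseteq> - S" if "x \<in> - S" for x
  proof -
    from near that obtain n where "\<forall>y\<in>S. \<not> agree n x y" by blast
    then show ?thesis
      using open_cylinder[of n x] by (intro exI[of _ "cylinder n x"]) (auto simp: cylinder_def)
  qed
  then have "open (- S)" using open_subopen[of "- S"] by blast
  then show "closed S" by (simp add: closed_def)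
qed

lemma islimpt_iff_agree: "x islimpt S \<longleftrightarrow> (\<forall>n. \<exists>y\<in>S. y \<noteq> x \<and> agree n x y)"
proof
  assume "x islimpt S"
  show "\<forall>n. \<exists>y\<in>S. y \<noteq> x \<and> agree n x y"
  proof
    fix n
    have "x \<in> cylinder n x" by (simp add: cylinder_def)
    with \<open>x islimpt S\<close> open_cylinder obtain y where "y \<in> S" "y \<in> cylinder n x" "y \<noteq> x"
      unfolding islimpt_def by blast
    then show "\<exists>y\<in>S. y \<noteq> x \<and> agree n x y" by (auto simp: cylinder_def)
  qed
next
  assume "\<forall>n. \<exists>y\<in>S. y \<noteq> x \<and> agree n x y"
  then show "x islimpt S"
    unfolding islimpt_def by (metis open_contains_cylinder cylinder_def mem_Collect_eq subset_iff)
qed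

lemma perfect_set_iff_agree:
  "perfect_set P \<longleftrightarrow> P \<noteq> {} \<and> closed P \<and> (\<forall>x\<in>P. \<forall>n. \<exists>y\<in>P. y \<noteq> x \<and> agree n x y)"
  by (simp add: perfect_set_def islimpt_iff_agree)

lemma perfect_set_UNIV: "perfect_set UNIV"
proof -
  have "(x(n := \<not> x n)) \<noteq> x \<and> agree n x (x(n := \<not> x n))" for x :: "nat \<Rightarrow> bool" and n
    by (auto simp: agree_def fun_eq_iff)
  then show ?thesis by (auto simp: perfect_set_iff_agree)
qed

lemma closed_cylinder: "closed (cylinder n x)"
  unfolding closed_iff_agree
proof (intro allI impI)
  fix z assume "\<forall>m. \<exists>y\<in>cylinder n x. agree m z y"
  then obtain y where "agree n x y" "agree n z y" by (auto simp: cylinder_def)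
  then show "z \<in> cylinder n x" by (simp add: cylinder_def agree_def)
qed

lemma perfect_set_Int_cylinder:
  assumes P: "perfect_set P" and "p \<in> P"
  shows "perfect_set (P \<inter> cylinder n p)"
  unfolding perfect_set_iff_agree
proof (intro conjI ballI allI)
  show "P \<inter> cylinder n p \<noteq> {}" using \<open>p \<in> P\<close> by (auto simp: cylinder_def)
  show "closed (P \<inter> cylinder n p)" using P by (simp add: perfect_set_iff_agree closed_Int closed_cylinder)
next
  fix x m assume x: "x \<in> P \<inter> cylinder n p"
  then obtain y where y: "y \<in> P" "y \<noteq> x" "agree (max m n) x y"
    using P by (auto simp: perfect_set_iff_agree)
  then have "agree m x y" "agree n x y" using agree_mono[OF y(3)] by auto
  then have "y \<in> cylinder n p" "agree m x y"
    using x by (auto simp: cylinder_def intro: agree_trans)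
  with y show "\<exists>y\<in>P \<inter> cylinder n p. y \<noteq> x \<and> agree m x y" by blast
qed

section \<open>Uniform embeddings of Cantor space\<close>

definition uniform_embedding :: "((nat \<Rightarrow> bool) \<Rightarrow> (nat \<Rightarrow> bool)) \<Rightarrow> bool" where
  "uniform_embedding e \<longleftrightarrow>
     (\<forall>n z w. agree n z w \<longrightarrow> agree n (e z) (e w)) \<and>
     (\<forall>n. \<exists>m. \<forall>z w. agree m (e z) (e w) \<longrightarrow> agree n z w)"

lemma uniform_embedding_agree: "uniform_embedding e \<Longrightarrow> agree n z w \<Longrightarrow> agree n (e z) (e w)"
  by (simp add: uniform_embedding_def)

lemma uniform_embedding_modulus:
  assumes "uniform_embedding e"
  obtains m where "\<And>j k. j \<le> k \<Longrightarrow> m j \<le> m k" "\<And>n. n \<le> m n" "\<And>n z w. agree (m n) (e z) (e w) \<Longrightarrow> agree n z w"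
proof -
  from assms have "\<forall>n. \<exists>m. \<forall>z w. agree m (e z) (e w) \<longrightarrow> agree n z w"
    by (simp add: uniform_embedding_def)
  then obtain m0 where m0: "\<And>n z w. agree (m0 n) (e z) (e w) \<Longrightarrow> agree n z w"
    by metis
  define m where "m n = (\<Sum>j\<le>n. m0 j + j)" for n
  have bound: "m0 n + n \<le> m n" for n
    unfolding m_def by (rule member_le_sum[of n "{..n}" "\<lambda>j. m0 j + j"]) auto
  show thesis
  proof (rule that)
    show "m j \<le> m k" if "j \<le> k" for j k
      unfolding m_def using that by (auto intro!: sum_mono2)
    show "n \<le> m n" for n
      using bound[of n] by simp
    show "agree n z w" if "agree (m n) (e z) (e w)" for n z w
      by (rule m0[OF agree_mono[OF that]]) (use bound[of n] in simp)
  qed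
qed

lemma uniform_embedding_inj:
  assumes "uniform_embedding e"
  shows "inj e"
proof (rule injI)
  fix z w assume "e z = e w"
  obtain m where "\<And>j k. j \<le> k \<Longrightarrow> m j \<le> m k" "\<And>n. n \<le> m n" and m: "\<And>n z w. agree (m n) (e z) (e w) \<Longrightarrow> agree n z w"
    using uniform_embedding_modulus[OF assms] by metis
  have "agree n z w" for n
    by (rule m) (simp add: \<open>e z = e w\<close>)
  then show "z = w" using agree_all_iff by blast
qed

lemma closed_image_uniform_embedding:
  assumes e: "uniform_embedding e" and R: "closed R"
  shows "closed (e ` R)"
  unfolding closed_iff_agree
proof (intro allI impI)
  fix x assume "\<forall>n. \<exists>y\<in>e ` R. agree n x y"
  obtain m where m: "\<And>j k. j \<le> k \<Longrightarrow> m j \<le> m k" "\<And>n. n \<le> m n" "\<And>n z w. agree (m n) (e z) (e w) \<Longrightarrow> agree n z w"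
    using uniform_embedding_modulus[OF e] by metis
  have "\<forall>n. \<exists>z. z \<in> R \<and> agree (m n) x (e z)"
    using \<open>\<forall>n. \<exists>y\<in>e ` R. agree n x y\<close> by blast
  then obtain y where y: "\<And>n. y n \<in> R" "\<And>n. agree (m n) x (e (y n))"
    by metis
  have cauchy: "agree j (y j) (y k)" if "j \<le> k" for j k
  proof (rule m(3))
    have "agree (m j) x (e (y k))" using y(2)[of k] m(1)[OF that] by (rule agree_mono)
    then show "agree (m j) (e (y j)) (e (y k))" using agree_sym[OF y(2)[of j]] by (rule agree_trans[rotated])
  qed
  have lim: "agree n (y n) (\<lambda>i. y (Suc i) i)" for n
    using agree_diagonal[of "\<lambda>j. j", OF cauchy] by simp
  have "\<forall>n. \<exists>z\<in>R. agree n (\<lambda>i. y (Suc i) i) z"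
    using y(1) agree_sym[OF lim] by blast
  then have "(\<lambda>i. y (Suc i) i) \<in> R"
    using R by (simp add: closed_iff_agree)
  moreover have "e (\<lambda>i. y (Suc i) i) = x"
  proof
    fix i
    have "agree (Suc i) x (e (y (Suc i)))" using y(2) m(2) by (rule agree_mono)
    moreover have "agree (Suc i) (e (y (Suc i))) (e (\<lambda>i. y (Suc i) i))"
      using uniform_embedding_agree[OF e lim] .
    ultimately show "e (\<lambda>i. y (Suc i) i) i = x i" by (simp add: agree_def)
  qed
  ultimately show "x \<in> e ` R" by blast
qed

lemma perfect_set_image_uniform_embedding:
  assumes e: "uniform_embedding e" and R: "perfect_set R"
  shows "perfect_set (e ` R)"
  unfolding perfect_set_iff_agree
proof (intro conjI ballI allI)
  show "e ` R \<noteq> {}" "closed (e ` R)"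
    using R closed_image_uniform_embedding[OF e] by (auto simp: perfect_set_iff_agree)
next
  fix x n assume "x \<in> e ` R"
  then obtain z where z: "z \<in> R" "x = e z" by blast
  then obtain w where "w \<in> R" "w \<noteq> z" "agree n z w"
    using R by (auto simp: perfect_set_iff_agree)
  then show "\<exists>y\<in>e ` R. y \<noteq> x \<and> agree n x y"
    using z uniform_embedding_inj[OF e] uniform_embedding_agree[OF e]
    by (intro bexI[of _ "e w"]) (auto dest: injD)
qed

lemma perfect_set_vimage_uniform_embedding:
  assumes e: "uniform_embedding e" and P: "perfect_set P" and "P \<subseteq> range e"
  shows "perfect_set (e -` P)"
  unfolding perfect_set_iff_agree
proof (intro conjI ballI allI)
  from P obtain p where "p \<in> P" by (auto simp: perfect_set_iff_agree)
  with \<open>P \<subseteq> range e\<close> show "e -` P \<noteq> {}" by blast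
  show "closed (e -` P)"
    unfolding closed_iff_agree
  proof (intro allI impI)
    fix z assume "\<forall>n. \<exists>w\<in>e -` P. agree n z w"
    then have "\<forall>n. \<exists>y\<in>P. agree n (e z) y"
      using uniform_embedding_agree[OF e] by blast
    with P show "z \<in> e -` P" by (simp add: perfect_set_iff_agree closed_iff_agree)
  qed
next
  fix z n assume "z \<in> e -` P"
  obtain m where "\<And>j k. j \<le> k \<Longrightarrow> m j \<le> m k" "\<And>n. n \<le> m n" and m: "\<And>n z w. agree (m n) (e z) (e w) \<Longrightarrow> agree n z w"
    using uniform_embedding_modulus[OF e] by metis
  from \<open>z \<in> e -` P\<close> P obtain y where "y \<in> P" "y \<noteq> e z" "agree (m n) (e z) y"
    by (auto simp: perfect_set_iff_agree)
  moreover then obtain w where "y = e w" using \<open>P \<subseteq> range e\<close> by blast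
  moreover have "agree n z w" using m \<open>agree (m n) (e z) y\<close> \<open>y = e w\<close> by blast
  ultimately show "\<exists>w\<in>e -` P. w \<noteq> z \<and> agree n z w" by auto
qed

lemma marczewski_null_image_uniform_embedding:
  assumes e: "uniform_embedding e" and Y: "marczewski_null Y"
  shows "marczewski_null (e ` Y)"
  unfolding marczewski_null_def
proof (intro allI impI)
  fix P assume P: "perfect_set P"
  show "\<exists>Q. perfect_set Q \<and> Q \<subseteq> P \<and> Q \<inter> e ` Y = {}"
  proof (cases "P \<subseteq> range e")
    case True
    with Y obtain Q where Q: "perfect_set Q" "Q \<subseteq> e -` P" "Q \<inter> Y = {}"
      using perfect_set_vimage_uniform_embedding[OF e P] by (auto simp: marczewski_null_def)
    then have "e ` Q \<inter> e ` Y = {}"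
      using uniform_embedding_inj[OF e] by (auto dest: injD)
    with Q show ?thesis
      using perfect_set_image_uniform_embedding[OF e] by (intro exI[of _ "e ` Q"]) auto
  next
    case False
    then obtain p where "p \<in> P" "p \<notin> range e" by blast
    moreover have "closed (range e)"
      using closed_image_uniform_embedding[OF e closed_UNIV] .
    ultimately obtain n where "\<forall>y\<in>range e. \<not> agree n p y"
      unfolding closed_iff_agree by blast
    then have "(P \<inter> cylinder n p) \<inter> e ` Y = {}" by (auto simp: cylinder_def)
    with perfect_set_Int_cylinder[OF P \<open>p \<in> P\<close>] show ?thesis by blast
  qed
qed

section \<open>Splitting schemes\<close>

text \<open>The copy of Cantor space is the set of branches of a binary tree of approximations:
  \<open>point z k\<close> is the approximation reached after following the first \<open>k\<close> bits of \<open>z\<close>, and its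
  first \<open>level z k\<close> coordinates are fixed from then on.\<close>

locale splitting_scheme =
  fixes P :: "(nat \<Rightarrow> bool) set" and I :: "nat set" and root :: "nat \<Rightarrow> bool"
    and left right :: "(nat \<Rightarrow> bool) \<Rightarrow> nat \<Rightarrow> nat \<Rightarrow> bool"
    and split_at :: "(nat \<Rightarrow> bool) \<Rightarrow> nat \<Rightarrow> nat"
  assumes closed: "closed P" and root_in: "root \<in> P"
    and left_in: "x \<in> P \<Longrightarrow> left x n \<in> P" and right_in: "x \<in> P \<Longrightarrow> right x n \<in> P"
    and agree_left: "x \<in> P \<Longrightarrow> agree n x (left x n)"
    and agree_right: "x \<in> P \<Longrightarrow> agree n x (right x n)"
    and split_at_in: "x \<in> P \<Longrightarrow> split_at x n \<in> I"
    and left_right_differ: "x \<in> P \<Longrightarrow> left x n (split_at x n) \<noteq> right x n (split_at x n)"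
begin

fun node :: "(nat \<Rightarrow> bool) \<Rightarrow> nat \<Rightarrow> (nat \<Rightarrow> bool) \<times> nat" where
  "node z 0 = (root, 0)"
| "node z (Suc k) = (case node z k of (x, n) \<Rightarrow>
     (if z k then right x n else left x n, Suc (max (split_at x n) n)))"

definition point :: "(nat \<Rightarrow> bool) \<Rightarrow> nat \<Rightarrow> nat \<Rightarrow> bool" where
  "point z k = fst (node z k)"

definition level :: "(nat \<Rightarrow> bool) \<Rightarrow> nat \<Rightarrow> nat" where
  "level z k = snd (node z k)"

lemma point_0: "point z 0 = root"
  by (simp add: point_def)

lemma point_Suc:
  "point z (Suc k) = (if z k then right (point z k) (level z k) else left (point z k) (level z k))"
  by (simp add: point_def level_def split: prod.split)

lemma level_Suc: "level z (Suc k) = Suc (max (split_at (point z k) (level z k)) (level z k))"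
  by (simp add: point_def level_def split: prod.split)

lemma point_in: "point z k \<in> P"
  by (induction k) (simp_all add: point_0 point_Suc root_in left_in right_in)

lemma le_level: "k \<le> level z k"
  by (induction k) (simp_all add: level_Suc)

lemma level_mono: "k \<le> k' \<Longrightarrow> level z k \<le> level z k'"
  by (rule lift_Suc_mono_le[of "level z"]) (simp_all add: level_Suc)

lemma agree_point_Suc: "agree (level z k) (point z k) (point z (Suc k))"
  using agree_left[OF point_in] agree_right[OF point_in] by (simp add: point_Suc)

lemma agree_point_le: "k \<le> k' \<Longrightarrow> agree (level z k) (point z k) (point z k')"
proof (induction k' rule: dec_induct)
  case base
  show ?case by simp
next
  case (step m)
  have "agree (level z k) (point z m) (point z (Suc m))"
    using agree_point_Suc[of z m] level_mono[OF step(1)] by (rule agree_mono)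
  with step(3) show ?case by (rule agree_trans)
qed

definition limit :: "(nat \<Rightarrow> bool) \<Rightarrow> nat \<Rightarrow> bool" where
  "limit z = (\<lambda>i. point z (Suc i) i)"

lemma agree_limit: "agree (level z k) (point z k) (limit z)"
  unfolding limit_def by (rule agree_diagonal[of "level z" "point z", OF agree_point_le le_level])

lemma limit_in: "limit z \<in> P"
proof -
  have "\<exists>y\<in>P. agree n (limit z) y" for n
  proof -
    have "agree n (point z n) (limit z)"
      using agree_limit le_level by (rule agree_mono)
    with point_in show ?thesis by (blast dest: agree_sym)
  qed
  with closed show ?thesis by (simp add: closed_iff_agree)
qed

lemma node_cong: "agree k z w \<Longrightarrow> node z k = node w k"
proof (induction k)
  case 0
  show ?case by simp
next
  case (Suc k)
  then have "agree k z w" "z k = w k" by (auto simp: agree_def)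
  with Suc.IH show ?case by simp
qed

lemma point_cong: "agree k z w \<Longrightarrow> point z k = point w k"
  and level_cong: "agree k z w \<Longrightarrow> level z k = level w k"
  by (simp_all add: point_def level_def node_cong)

lemma agree_limit_limit: "agree n z w \<Longrightarrow> agree n (limit z) (limit w)"
proof -
  assume "agree n z w"
  then have "point w n = point z n" "level w n = level z n"
    by (simp_all add: point_cong level_cong)
  then have "agree (level z n) (point z n) (limit w)"
    using agree_limit[of w n] by simp
  with agree_limit[of z n] have "agree (level z n) (limit z) (limit w)"
    by (rule agree_trans[OF agree_sym])
  then show ?thesis using le_level by (rule agree_mono)
qed

lemma limit_differ_below_level:
  assumes "agree k z w" "z k \<noteq> w k"
  shows "\<exists>i\<in>I. i < level z (Suc k) \<and> limit z i \<noteq> limit w i"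
proof -
  define x n where "x = point z k" and "n = level z k"
  define i where "i = split_at x n"
  have w: "point w k = x" "level w k = n"
    using assms(1) by (simp_all add: x_def n_def point_cong level_cong)
  have lev: "level z (Suc k) = Suc (max i n)" "level w (Suc k) = Suc (max i n)"
    using w by (simp_all add: level_Suc x_def n_def i_def)
  have "limit z i = point z (Suc k) i" "limit w i = point w (Suc k) i"
    using agree_limit[of z "Suc k"] agree_limit[of w "Suc k"] lev by (auto simp: agree_def)
  moreover have "point z (Suc k) i \<noteq> point w (Suc k) i"
    using assms(2) w left_right_differ[OF point_in, of z k n]
    by (cases "z k") (simp_all add: point_Suc x_def n_def i_def)
  moreover have "i \<in> I"
    using split_at_in[OF point_in] by (simp add: i_def x_def)
  ultimately show ?thesis using lev(1) by (intro bexI[of _ i]) auto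
qed

lemma limit_separates: "z \<noteq> w \<Longrightarrow> \<exists>i\<in>I. limit z i \<noteq> limit w i"
proof -
  assume "z \<noteq> w"
  then obtain n where "\<not> agree n z w" using agree_all_iff by blast
  then obtain k where "agree k z w" "z k \<noteq> w k" by (rule first_difference)
  then show ?thesis using limit_differ_below_level by blast
qed

text \<open>Since \<open>level z n\<close> depends only on the first \<open>n\<close> bits of \<open>z\<close>, it takes finitely many values.\<close>

lemma level_bounded: "\<exists>M. \<forall>z. level z n \<le> M"
proof -
  let ?trunc = "\<lambda>z :: nat \<Rightarrow> bool. \<lambda>i. i < n \<and> z i"
  have same: "level z n = level (?trunc z) n" for z
    by (rule level_cong) (simp add: agree_def)
  have "range ?trunc \<subseteq> (\<lambda>S i. i \<in> S) ` Pow {..<n}"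
  proof
    fix t assume "t \<in> range ?trunc"
    then obtain z where "t = ?trunc z" by blast
    then show "t \<in> (\<lambda>S i. i \<in> S) ` Pow {..<n}"
      by (intro image_eqI[of _ _ "{i. i < n \<and> z i}"]) auto
  qed
  then have "finite (range ?trunc)" by (rule finite_subset) simp
  then have "finite ((\<lambda>z. level z n) ` range ?trunc)" by simp
  then obtain M where "\<forall>l\<in>(\<lambda>z. level z n) ` range ?trunc. l \<le> M"
    using finite_nat_set_iff_bounded_le by blast
  then have "level z n \<le> M" for z using same[of z] by auto
  then show ?thesis by blast
qed

lemma limit_uniform_inverse: "\<exists>m. \<forall>z w. agree m (limit z) (limit w) \<longrightarrow> agree n z w"
proof -
  obtain M where M: "\<And>z. level z n \<le> M" using level_bounded by blast
  have "agree n z w" if close: "agree M (limit z) (limit w)" for z w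
  proof (rule ccontr)
    assume "\<not> agree n z w"
    then obtain k where k: "k < n" "agree k z w" "z k \<noteq> w k" by (rule first_difference)
    then obtain i where i: "i < level z (Suc k)" "limit z i \<noteq> limit w i"
      using limit_differ_below_level by blast
    have "level z (Suc k) \<le> M" using level_mono[of "Suc k" n z] k(1) M[of z] by simp
    with i close show False by (simp add: agree_def)
  qed
  then show ?thesis by blast
qed

lemma uniform_embedding_limit: "uniform_embedding limit"
  unfolding uniform_embedding_def using agree_limit_limit limit_uniform_inverse by blast

end

lemma splitting_embedding:
  assumes "closed P" "P \<noteq> {}"
    and splits: "\<And>x n. x \<in> P \<Longrightarrow> \<exists>a\<in>P. \<exists>b\<in>P. agree n x a \<and> agree n x b \<and> (\<exists>i\<in>I. a i \<noteq> b i)"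
  obtains e where "uniform_embedding e" "range e \<subseteq> P" "\<And>z w. z \<noteq> w \<Longrightarrow> \<exists>i\<in>I. e z i \<noteq> e w i"
proof -
  obtain root where "root \<in> P" using assms(2) by blast
  have "\<forall>x n. \<exists>a b i. x \<in> P \<longrightarrow> a \<in> P \<and> b \<in> P \<and> agree n x a \<and> agree n x b \<and> i \<in> I \<and> a i \<noteq> b i"
    using splits by metis
  then obtain left right split_at where choice: "\<And>x n. x \<in> P \<Longrightarrow>
      left x n \<in> P \<and> right x n \<in> P \<and> agree n x (left x n) \<and> agree n x (right x n) \<and>
      split_at x n \<in> I \<and> left x n (split_at x n) \<noteq> right x n (split_at x n)"
    by metis
  interpret splitting_scheme P I root left right split_at
    using \<open>closed P\<close> \<open>root \<in> P\<close> choice by unfold_locales simp_all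
  show thesis
    by (rule that[OF uniform_embedding_limit]) (use limit_in limit_separates in auto)
qed

lemma perfect_set_embedding:
  assumes P: "perfect_set P"
  obtains e where "uniform_embedding e" "range e \<subseteq> P"
proof -
  have "\<exists>a\<in>P. \<exists>b\<in>P. agree n x a \<and> agree n x b \<and> (\<exists>i\<in>UNIV. a i \<noteq> b i)" if "x \<in> P" for x n
  proof -
    from P that obtain y where "y \<in> P" "y \<noteq> x" "agree n x y"
      by (auto simp: perfect_set_iff_agree)
    with that show ?thesis by (intro bexI[of _ x] bexI[of _ y]) (auto simp: fun_eq_iff)
  qed
  moreover have "closed P" "P \<noteq> {}" using P by (simp_all add: perfect_set_iff_agree)
  ultimately obtain e where "uniform_embedding e" "range e \<subseteq> P"
    using splitting_embedding by metis
  then show thesis by (rule that)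
qed

section \<open>Sets of size less than the continuum\<close>

abbreviation small :: "'a set \<Rightarrow> bool" where
  "small A \<equiv> A \<prec> (UNIV :: (nat \<Rightarrow> bool) set)"

lemma lesspoll_iff_card_of_ordLess: "A \<prec> B \<longleftrightarrow> |A| <o |B|"
proof -
  have "A \<prec> B \<longleftrightarrow> |A| \<le>o |B| \<and> \<not> |A| =o |B|"
    by (simp add: lesspoll_def lepoll_def eqpoll_def card_of_ordLeq[symmetric] card_of_ordIso[symmetric])
  also have "\<dots> \<longleftrightarrow> |A| <o |B|"
    using ordLeq_iff_ordLess_or_ordIso not_ordLess_ordIso by blast
  finally show ?thesis .
qed

lemma infinite_cantor_space: "infinite (UNIV :: (nat \<Rightarrow> bool) set)"
proof
  assume "finite (UNIV :: (nat \<Rightarrow> bool) set)"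
  then have "finite (range (\<lambda>n::nat. \<lambda>i. i = n))" by (rule finite_subset[rotated]) simp
  moreover have "inj (\<lambda>n::nat. \<lambda>i. i = n)" by (auto simp: inj_def fun_eq_iff)
  ultimately show False using finite_imageD by fastforce
qed

lemma small_subset: "small A \<Longrightarrow> B \<subseteq> A \<Longrightarrow> small B"
  using lesspoll_trans1[OF subset_imp_lepoll] by blast

lemma small_image: "small A \<Longrightarrow> small (f ` A)"
  using lesspoll_trans1[OF image_lepoll] by blast

lemma small_Un: "small A \<Longrightarrow> small B \<Longrightarrow> small (A \<union> B)"
  unfolding lesspoll_iff_card_of_ordLess by (rule card_of_Un_ordLess_infinite[OF infinite_cantor_space])

lemma small_insert: "small A \<Longrightarrow> small (insert x A)"
  using small_Un[of "{x}" A] finite_lesspoll_infinite[OF infinite_cantor_space, of "{x}"] by simp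

lemma not_small_if_inj:
  fixes f :: "(nat \<Rightarrow> bool) \<Rightarrow> 'a"
  assumes "inj f" "range f \<subseteq> A"
  shows "\<not> small A"
proof
  assume "small A"
  moreover have "(UNIV :: (nat \<Rightarrow> bool) set) \<lesssim> A"
    using assms unfolding lepoll_def by blast
  ultimately have "A \<prec> A" by (rule lesspoll_trans2)
  then show False by simp
qed

lemma not_small_UNIV: "\<not> small (UNIV :: (nat \<Rightarrow> bool) set)"
  by (rule not_small_if_inj[of id]) auto

section \<open>Fibres of the even coordinates\<close>

definition evens :: "(nat \<Rightarrow> bool) \<Rightarrow> nat \<Rightarrow> bool" where
  "evens x = (\<lambda>k. x (2 * k))"

definition fiber :: "(nat \<Rightarrow> bool) \<Rightarrow> (nat \<Rightarrow> bool) set" where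
  "fiber y = {x. evens x = y}"

lemma mem_fiber_iff: "x \<in> fiber y \<longleftrightarrow> (\<forall>k. x (2 * k) = y k)"
  by (auto simp: fiber_def evens_def)

lemma perfect_set_fiber: "perfect_set (fiber y)"
  unfolding perfect_set_iff_agree
proof (intro conjI ballI allI)
  have "(\<lambda>i. even i \<and> y (i div 2)) \<in> fiber y" by (simp add: mem_fiber_iff)
  then show "fiber y \<noteq> {}" by blast
  show "closed (fiber y)"
    unfolding closed_iff_agree
  proof (intro allI impI)
    fix x assume near: "\<forall>n. \<exists>w\<in>fiber y. agree n x w"
    have "x (2 * k) = y k" for k
    proof -
      from near obtain w where "w \<in> fiber y" "agree (Suc (2 * k)) x w" by blast
      then show ?thesis by (simp add: mem_fiber_iff agree_def)
    qed
    then show "x \<in> fiber y" by (simp add: mem_fiber_iff)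
  qed
next
  fix x n assume "x \<in> fiber y"
  define w where "w = x(Suc (2 * n) := \<not> x (Suc (2 * n)))"
  have "2 * k \<noteq> Suc (2 * n)" for k by presburger
  then have "w \<in> fiber y" using \<open>x \<in> fiber y\<close> by (simp add: w_def mem_fiber_iff)
  moreover have "w \<noteq> x" "agree n x w" by (auto simp: w_def agree_def fun_eq_iff)
  ultimately show "\<exists>w\<in>fiber y. w \<noteq> x \<and> agree n x w" by blast
qed

text \<open>The image of each fibre under an embedding into \<open>P\<close> is a perfect subset of \<open>P\<close>;
  these continuum many sets are disjoint, so one of them misses a given small set.\<close>

lemma perfect_subset_avoiding_small:
  assumes P: "perfect_set P" and A: "small A"
  obtains Q where "perfect_set Q" "Q \<subseteq> P" "Q \<inter> A = {}"
proof -
  obtain e where e: "uniform_embedding e" "range e \<subseteq> P"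
    using perfect_set_embedding[OF P] by metis
  have "\<exists>y. e ` fiber y \<inter> A = {}"
  proof (rule ccontr)
    assume "\<nexists>y. e ` fiber y \<inter> A = {}"
    then have "\<forall>y. \<exists>z. z \<in> fiber y \<and> e z \<in> A" by blast
    then obtain f where f: "\<And>y. f y \<in> fiber y" "\<And>y. e (f y) \<in> A" by metis
    have "inj f"
    proof (rule injI)
      fix y y' assume "f y = f y'"
      then show "y = y'" using f(1)[of y] f(1)[of y'] by (simp add: fiber_def)
    qed
    with uniform_embedding_inj[OF e(1)] have "inj (e \<circ> f)" by (rule inj_compose)
    moreover have "range (e \<circ> f) \<subseteq> A" using f(2) by auto
    ultimately have "\<not> small A" by (rule not_small_if_inj)
    with A show False by contradiction
  qed
  then obtain y where "e ` fiber y \<inter> A = {}" by blast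
  moreover have "perfect_set (e ` fiber y)"
    using e(1) perfect_set_fiber by (rule perfect_set_image_uniform_embedding)
  moreover have "e ` fiber y \<subseteq> P" using e(2) by blast
  ultimately show thesis by (rule that[rotated 2])
qed

definition thin :: "(nat \<Rightarrow> bool) set \<Rightarrow> bool" where
  "thin Q \<longleftrightarrow> (\<exists>y0. \<forall>y. y \<noteq> y0 \<longrightarrow> (\<exists>q. Q \<inter> fiber y \<subseteq> {q}))"

lemma thinI: "(\<And>y. y \<noteq> y0 \<Longrightarrow> \<exists>q. Q \<inter> fiber y \<subseteq> {q}) \<Longrightarrow> thin Q"
  unfolding thin_def by blast

lemma thin_subset:
  assumes "thin Q" "Q' \<subseteq> Q"
  shows "thin Q'"
proof -
  from assms(1) obtain y0 where y0: "\<And>y. y \<noteq> y0 \<Longrightarrow> \<exists>q. Q \<inter> fiber y \<subseteq> {q}"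
    unfolding thin_def by blast
  have "\<exists>q. Q' \<inter> fiber y \<subseteq> {q}" if ne: "y \<noteq> y0" for y
  proof -
    obtain q where "Q \<inter> fiber y \<subseteq> {q}" using y0[OF ne] by blast
    then have "Q' \<inter> fiber y \<subseteq> {q}" using assms(2) by blast
    then show ?thesis by blast
  qed
  then show ?thesis by (rule thinI)
qed

text \<open>Either some portion of \<open>P\<close> lies in a single fibre, or every point of \<open>P\<close> splits at an even
  coordinate, and then the splitting scheme yields a perfect subset meeting each fibre at most once.\<close>

lemma perfect_thin_subset:
  assumes P: "perfect_set P"
  obtains Q where "perfect_set Q" "Q \<subseteq> P" "thin Q"
proof (cases "\<exists>p\<in>P. \<exists>n. P \<inter> cylinder n p \<subseteq> fiber (evens p)")
  case True
  then obtain p n where p: "p \<in> P" "P \<inter> cylinder n p \<subseteq> fiber (evens p)" by blast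
  have "P \<inter> cylinder n p \<inter> fiber y = {}" if "y \<noteq> evens p" for y
    using p(2) that unfolding fiber_def by blast
  then have "\<exists>q. P \<inter> cylinder n p \<inter> fiber y \<subseteq> {q}" if "y \<noteq> evens p" for y
    using that by blast
  then have "thin (P \<inter> cylinder n p)" by (rule thinI)
  then show thesis by (rule that[OF perfect_set_Int_cylinder[OF P p(1)] Int_lower1])
next
  case False
  have splits: "\<exists>a\<in>P. \<exists>b\<in>P. agree n x a \<and> agree n x b \<and> (\<exists>i\<in>{i. even i}. a i \<noteq> b i)"
    if "x \<in> P" for x n
  proof -
    from False that have "\<not> P \<inter> cylinder n x \<subseteq> fiber (evens x)" by blast
    then obtain a where "a \<in> P" "a \<in> cylinder n x" "a \<notin> fiber (evens x)" by blast
    then have a: "a \<in> P" "agree n x a" "evens a \<noteq> evens x"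
      by (simp_all add: cylinder_def fiber_def)
    then obtain k where "a (2 * k) \<noteq> x (2 * k)" by (auto simp: evens_def fun_eq_iff)
    then have "\<exists>i\<in>{i. even i}. x i \<noteq> a i" by (intro bexI[of _ "2 * k"]) simp_all
    with a that agree_refl[of n x] show ?thesis by blast
  qed
  have "closed P" "P \<noteq> {}" using P by (simp_all add: perfect_set_iff_agree)
  then obtain e where e: "uniform_embedding e" "range e \<subseteq> P"
    and sep: "\<And>z w. z \<noteq> w \<Longrightarrow> \<exists>i\<in>{i. even i}. e z i \<noteq> e w i"
    by (rule splitting_embedding[OF _ _ splits]) (assumption, rule that)
  have evens_inj: "z = w" if "evens (e z) = evens (e w)" for z w
  proof (rule ccontr)
    assume "z \<noteq> w"
    then obtain i where "even i" "e z i \<noteq> e w i" using sep by blast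
    then obtain k where "e z (2 * k) \<noteq> e w (2 * k)" by (elim evenE) simp
    then have "evens (e z) k \<noteq> evens (e w) k" by (simp add: evens_def)
    with that show False by simp
  qed
  have single: "range e \<inter> fiber y \<subseteq> {e z}" if "e z \<in> fiber y" for y z
  proof
    fix x assume "x \<in> range e \<inter> fiber y"
    then obtain w where "x = e w" "e w \<in> fiber y" by blast
    with that have "evens (e w) = evens (e z)" by (simp add: fiber_def)
    then have "w = z" by (rule evens_inj)
    with \<open>x = e w\<close> show "x \<in> {e z}" by simp
  qed
  have "\<exists>q. range e \<inter> fiber y \<subseteq> {q}" for y
  proof (cases "\<exists>z. e z \<in> fiber y")
    case True
    then obtain z where "e z \<in> fiber y" by blast
    then show ?thesis using single by blast
  next
    case False
    then have "range e \<inter> fiber y = {}" by blast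
    then show ?thesis by blast
  qed
  then have "thin (range e)" by (rule thinI)
  moreover have "perfect_set (range e)"
    using e(1) perfect_set_UNIV by (rule perfect_set_image_uniform_embedding)
  ultimately show thesis using e(2) by (rule that[rotated 2])
qed

lemma perfect_thin_subset_avoiding_small:
  assumes "perfect_set P" "small A"
  obtains Q where "perfect_set Q" "Q \<subseteq> P" "thin Q" "Q \<inter> A = {}"
proof -
  obtain Q1 where Q1: "perfect_set Q1" "Q1 \<subseteq> P" "thin Q1"
    using perfect_thin_subset[OF assms(1)] by metis
  obtain Q where Q: "perfect_set Q" "Q \<subseteq> Q1" "Q \<inter> A = {}"
    using perfect_subset_avoiding_small[OF Q1(1) assms(2)] by metis
  show thesis
  proof (rule that)
    show "perfect_set Q" "Q \<inter> A = {}" by (fact Q(1), fact Q(3))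
    show "Q \<subseteq> P" using Q(2) Q1(2) by (rule order_trans)
    show "thin Q" using Q1(3) Q(2) by (rule thin_subset)
  qed
qed

definition large_in_perfect_sets :: "(nat \<Rightarrow> bool) set \<Rightarrow> bool" where
  "large_in_perfect_sets Z \<longleftrightarrow> (\<forall>R. perfect_set R \<longrightarrow> \<not> small (R \<inter> Z))"

text \<open>Each of the thin sets meets a fibre avoiding their exceptional fibres in at most one point.\<close>

lemma large_set_escapes_thin_sets:
  assumes large: "large_in_perfect_sets Z"
    and "small B" and thin: "\<And>b. b \<in> B \<Longrightarrow> thin (T b)" and "small C"
  obtains x where "x \<in> Z" "x \<notin> C" "\<And>b. b \<in> B \<Longrightarrow> x \<notin> T b"
proof -
  obtain y0 where y0: "\<And>b y. b \<in> B \<Longrightarrow> y \<noteq> y0 b \<Longrightarrow> \<exists>q. T b \<inter> fiber y \<subseteq> {q}"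
    using thin unfolding thin_def by metis
  have "small (y0 ` B)" using \<open>small B\<close> by (rule small_image)
  then have "y0 ` B \<noteq> UNIV" using not_small_UNIV by metis
  then obtain y where y: "y \<notin> y0 ` B" by blast
  then have "\<forall>b\<in>B. \<exists>q. T b \<inter> fiber y \<subseteq> {q}" using y0 by blast
  then obtain q where q: "\<And>b. b \<in> B \<Longrightarrow> T b \<inter> fiber y \<subseteq> {q b}" by metis
  have "small (C \<union> q ` B)"
    using \<open>small C\<close> small_image[OF \<open>small B\<close>] by (rule small_Un)
  moreover have "\<not> small (fiber y \<inter> Z)"
    using large perfect_set_fiber by (simp add: large_in_perfect_sets_def)
  ultimately have "\<not> fiber y \<inter> Z \<subseteq> C \<union> q ` B" using small_subset by blast
  then obtain x where x: "x \<in> fiber y" "x \<in> Z" "x \<notin> C \<union> q ` B" by blast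
  have "x \<notin> T b" if "b \<in> B" for b
    using q[OF that] x(1,3) that by blast
  then show thesis using x(2,3) by (intro that[of x]) auto
qed

section \<open>Enumerating the perfect sets\<close>

definition prefixes :: "(nat \<Rightarrow> bool) set \<Rightarrow> bool list set" where
  "prefixes P = {s. \<exists>x\<in>P. \<forall>i<length s. x i = s ! i}"

lemma subset_if_prefixes_subset:
  assumes "closed P'" "prefixes P \<subseteq> prefixes P'"
  shows "P \<subseteq> P'"
proof
  fix x assume "x \<in> P"
  have "\<exists>y\<in>P'. agree n x y" for n
  proof -
    have "map x [0..<n] \<in> prefixes P" using \<open>x \<in> P\<close> by (auto simp: prefixes_def)
    with assms(2) have "map x [0..<n] \<in> prefixes P'" by blast
    then obtain y where "y \<in> P'" "\<forall>i<n. y i = x i" by (auto simp: prefixes_def)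
    then show ?thesis by (auto simp: agree_def)
  qed
  with assms(1) show "x \<in> P'" by (simp add: closed_iff_agree)
qed

lemma inj_on_prefixes: "inj_on prefixes {P. closed P}"
  by (rule inj_onI) (simp add: subset_antisym subset_if_prefixes_subset)

text \<open>A set of finite sequences is coded by the bits it assigns to their indices under
  \<open>to_nat\<close>.\<close>

lemma perfect_sets_lepoll: "{P. perfect_set P} \<lesssim> (UNIV :: (nat \<Rightarrow> bool) set)"
proof -
  let ?code = "\<lambda>T :: bool list set. \<lambda>n. from_nat n \<in> T"
  have "inj ?code"
  proof (rule injI)
    fix T T' assume "?code T = ?code T'"
    then have "from_nat (to_nat s) \<in> T \<longleftrightarrow> from_nat (to_nat s) \<in> T'" for s
      by (simp add: fun_eq_iff)
    then have "s \<in> T \<longleftrightarrow> s \<in> T'" for s by (metis from_nat_to_nat)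
    then show "T = T'" by auto
  qed
  moreover have "inj_on prefixes {P. perfect_set P}"
    using inj_on_prefixes by (rule inj_on_subset) (auto simp: perfect_set_iff_agree)
  ultimately have "inj_on (?code \<circ> prefixes) {P. perfect_set P}"
    by (simp add: inj_on_subset comp_inj_on)
  then show ?thesis unfolding lepoll_def by blast
qed

lemma perfect_set_enumeration:
  "\<exists>G :: (nat \<Rightarrow> bool) \<Rightarrow> (nat \<Rightarrow> bool) set.
     (\<forall>a. perfect_set (G a)) \<and> (\<forall>P. perfect_set P \<longrightarrow> P \<in> range G)"
proof -
  obtain g :: "(nat \<Rightarrow> bool) \<Rightarrow> (nat \<Rightarrow> bool) set" where g: "{P. perfect_set P} \<subseteq> range g"
    using perfect_sets_lepoll unfolding lepoll_iff by blast
  define G where "G a = (if perfect_set (g a) then g a else UNIV)" for a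
  have "perfect_set (G a)" for a by (simp add: G_def perfect_set_UNIV)
  moreover have "P \<in> range G" if "perfect_set P" for P
  proof -
    from g that obtain a where "P = g a" by blast
    with that have "G a = P" by (simp add: G_def)
    then show ?thesis using rangeI[of G a] by simp
  qed
  ultimately show ?thesis by blast
qed

section \<open>A transfinite construction of length continuum\<close>

definition continuum_order :: "(nat \<Rightarrow> bool) rel" where
  "continuum_order = |UNIV :: (nat \<Rightarrow> bool) set|"

definition before :: "(nat \<Rightarrow> bool) \<Rightarrow> (nat \<Rightarrow> bool) set" where
  "before a = underS continuum_order a"

lemma wo_rel_continuum_order: "wo_rel continuum_order"
  unfolding wo_rel_def continuum_order_def by (rule card_of_Well_order)

lemma small_before: "small (before a)"
  unfolding lesspoll_iff_card_of_ordLess before_def continuum_order_def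
  using card_of_underS[OF card_of_Card_order, of a UNIV] by (simp add: Field_card_of)

lemma before_total: "a \<noteq> b \<Longrightarrow> a \<in> before b \<or> b \<in> before a"
  using wo_rel.TOTALS[OF wo_rel_continuum_order]
  by (auto simp: before_def underS_def continuum_order_def Field_card_of)

text \<open>Along a well-order of length continuum, stage \<open>a\<close> picks a thin perfect subset of the
  \<open>a\<close>-th perfect set avoiding all points chosen so far, and then a new point of \<open>Z\<close> outside all
  subsets picked so far.\<close>

locale null_subset_construction =
  fixes Z :: "(nat \<Rightarrow> bool) set" and G :: "(nat \<Rightarrow> bool) \<Rightarrow> (nat \<Rightarrow> bool) set"
  assumes large: "large_in_perfect_sets Z"
    and perfect_G: "\<And>a. perfect_set (G a)"
    and G_onto: "\<And>P. perfect_set P \<Longrightarrow> P \<in> range G"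
begin

definition next_piece ::
  "((nat \<Rightarrow> bool) \<Rightarrow> (nat \<Rightarrow> bool) set \<times> (nat \<Rightarrow> bool)) \<Rightarrow> (nat \<Rightarrow> bool) \<Rightarrow> (nat \<Rightarrow> bool) set"
  where "next_piece f a =
    (SOME Q. perfect_set Q \<and> Q \<subseteq> G a \<and> thin Q \<and> Q \<inter> snd ` f ` before a = {})"

definition next_point ::
  "((nat \<Rightarrow> bool) \<Rightarrow> (nat \<Rightarrow> bool) set \<times> (nat \<Rightarrow> bool)) \<Rightarrow> (nat \<Rightarrow> bool) \<Rightarrow> nat \<Rightarrow> bool"
  where "next_point f a =
    (SOME x. x \<in> Z \<and> x \<notin> snd ` f ` before a \<and> x \<notin> next_piece f a \<and> (\<forall>b\<in>before a. x \<notin> fst (f b)))"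

definition stage :: "(nat \<Rightarrow> bool) \<Rightarrow> (nat \<Rightarrow> bool) set \<times> (nat \<Rightarrow> bool)" where
  "stage = wo_rel.worec continuum_order (\<lambda>f a. (next_piece f a, next_point f a))"

definition piece :: "(nat \<Rightarrow> bool) \<Rightarrow> (nat \<Rightarrow> bool) set" where
  "piece a = fst (stage a)"

definition chosen :: "(nat \<Rightarrow> bool) \<Rightarrow> nat \<Rightarrow> bool" where
  "chosen a = snd (stage a)"

lemma stage_eq: "stage a = (next_piece stage a, next_point stage a)"
proof -
  have "wo_rel.adm_wo continuum_order (\<lambda>f a. (next_piece f a, next_point f a))"
    unfolding wo_rel.adm_wo_def[OF wo_rel_continuum_order]
  proof (intro allI impI)
    fix f g :: "(nat \<Rightarrow> bool) \<Rightarrow> (nat \<Rightarrow> bool) set \<times> (nat \<Rightarrow> bool)" and a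
    assume eq: "\<forall>b\<in>underS continuum_order a. f b = g b"
    have img: "f ` before a = g ` before a"
      by (rule image_cong) (simp_all add: eq before_def)
    have piece: "next_piece f a = next_piece g a"
      unfolding next_piece_def img ..
    have "(\<forall>b\<in>before a. x \<notin> fst (f b)) \<longleftrightarrow> (\<forall>b\<in>before a. x \<notin> fst (g b))" for x
      using eq by (simp add: before_def)
    then have "next_point f a = next_point g a"
      unfolding next_point_def img piece by simp
    with piece show "(next_piece f a, next_point f a) = (next_piece g a, next_point g a)"
      by simp
  qed
  then have "stage = (\<lambda>a. (next_piece stage a, next_point stage a))"
    unfolding stage_def by (rule wo_rel.worec_fixpoint[OF wo_rel_continuum_order])
  then show ?thesis by (rule fun_cong)
qed

lemma piece_eq: "piece a = next_piece stage a"
  unfolding piece_def by (subst stage_eq) simp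

lemma chosen_eq: "chosen a = next_point stage a"
  unfolding chosen_def by (subst stage_eq) simp

lemma image_snd_stage: "snd ` stage ` A = chosen ` A"
  unfolding chosen_def[abs_def] image_image ..

lemma piece_spec:
  "perfect_set (piece a)" "piece a \<subseteq> G a" "thin (piece a)" "piece a \<inter> chosen ` before a = {}"
proof -
  have "small (chosen ` before a)" using small_before by (rule small_image)
  then obtain Q where "perfect_set Q" "Q \<subseteq> G a" "thin Q" "Q \<inter> chosen ` before a = {}"
    by (rule perfect_thin_subset_avoiding_small[OF perfect_G]) (rule that)
  then have "\<exists>Q. perfect_set Q \<and> Q \<subseteq> G a \<and> thin Q \<and> Q \<inter> snd ` stage ` before a = {}"
    unfolding image_snd_stage by (intro exI[of _ Q]) simp
  then have "perfect_set (next_piece stage a) \<and> next_piece stage a \<subseteq> G a \<and>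
      thin (next_piece stage a) \<and> next_piece stage a \<inter> snd ` stage ` before a = {}"
    unfolding next_piece_def by (rule someI_ex)
  then show "perfect_set (piece a)" "piece a \<subseteq> G a" "thin (piece a)"
    "piece a \<inter> chosen ` before a = {}"
    by (simp_all add: piece_eq image_snd_stage)
qed

lemma chosen_spec:
  "chosen a \<in> Z" "chosen a \<notin> chosen ` before a" "\<And>b. b \<in> insert a (before a) \<Longrightarrow> chosen a \<notin> piece b"
proof -
  obtain x where x: "x \<in> Z" "x \<notin> chosen ` before a" "\<And>b. b \<in> insert a (before a) \<Longrightarrow> x \<notin> piece b"
    by (rule large_set_escapes_thin_sets[where B = "insert a (before a)" and T = piece
        and C = "chosen ` before a", OF large small_insert[OF small_before] piece_spec(3)
        small_image[OF small_before]]) (rule that)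
  have "x \<notin> next_piece stage a" using x(3)[of a] by (simp add: piece_eq)
  moreover have "\<forall>b\<in>before a. x \<notin> fst (stage b)" using x(3) by (simp add: piece_def)
  moreover have "x \<notin> snd ` stage ` before a" using x(2) by (simp add: image_snd_stage)
  ultimately have "\<exists>x. x \<in> Z \<and> x \<notin> snd ` stage ` before a \<and> x \<notin> next_piece stage a \<and>
      (\<forall>b\<in>before a. x \<notin> fst (stage b))"
    using x(1) by (intro exI[of _ x]) simp
  then have "next_point stage a \<in> Z \<and> next_point stage a \<notin> snd ` stage ` before a \<and>
      next_point stage a \<notin> next_piece stage a \<and> (\<forall>b\<in>before a. next_point stage a \<notin> fst (stage b))"
    unfolding next_point_def by (rule someI_ex)
  then have "chosen a \<in> Z \<and> chosen a \<notin> chosen ` before a \<and> chosen a \<notin> piece a \<and>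
      (\<forall>b\<in>before a. chosen a \<notin> piece b)"
    by (simp add: chosen_eq[symmetric] piece_eq[symmetric] image_snd_stage piece_def[symmetric])
  then show "chosen a \<in> Z" "chosen a \<notin> chosen ` before a"
    "\<And>b. b \<in> insert a (before a) \<Longrightarrow> chosen a \<notin> piece b"
    by auto
qed

lemma inj_chosen: "inj chosen"
proof (rule injI, rule ccontr)
  fix a b assume eq: "chosen a = chosen b" and "a \<noteq> b"
  then consider "a \<in> before b" | "b \<in> before a" using before_total by blast
  then show False
  proof cases
    case 1
    then have "chosen b \<in> chosen ` before b" using eq by (metis imageI)
    with chosen_spec(2)[of b] show False by contradiction
  next
    case 2
    then have "chosen a \<in> chosen ` before a" using eq by (metis imageI)
    with chosen_spec(2)[of a] show False by contradiction
  qed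
qed

lemma piece_disjoint_chosen: "piece a \<inter> range chosen = {}"
proof -
  have "chosen b \<notin> piece a" for b
  proof (cases "b \<in> before a")
    case True
    then show ?thesis using piece_spec(4)[of a] by blast
  next
    case False
    then have "a \<in> insert b (before b)" using before_total[of a b] by blast
    then show ?thesis by (rule chosen_spec(3))
  qed
  then show ?thesis by blast
qed

lemma marczewski_null_range_chosen: "marczewski_null (range chosen)"
  unfolding marczewski_null_def
proof (intro allI impI)
  fix P assume "perfect_set P"
  then obtain a where "P = G a" using G_onto by blast
  show "\<exists>Q. perfect_set Q \<and> Q \<subseteq> P \<and> Q \<inter> range chosen = {}"
  proof (intro exI conjI)
    show "perfect_set (piece a)" by (rule piece_spec(1))
    show "piece a \<subseteq> P" using piece_spec(2)[of a] \<open>P = G a\<close> by simp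
    show "piece a \<inter> range chosen = {}" by (rule piece_disjoint_chosen)
  qed
qed

end

lemma null_subset_if_large_in_perfect_sets:
  assumes "large_in_perfect_sets Z"
  obtains Z' where "Z' \<subseteq> Z" "Z' \<approx> (UNIV :: (nat \<Rightarrow> bool) set)" "marczewski_null Z'"
proof -
  from perfect_set_enumeration obtain G :: "(nat \<Rightarrow> bool) \<Rightarrow> (nat \<Rightarrow> bool) set"
    where G: "\<forall>a. perfect_set (G a)" "\<forall>P. perfect_set P \<longrightarrow> P \<in> range G"
    by blast
  interpret null_subset_construction Z G
  proof
    show "large_in_perfect_sets Z" by (rule assms)
    show "perfect_set (G a)" for a using G(1) by blast
    show "P \<in> range G" if "perfect_set P" for P using G(2) that by blast
  qed
  have "range chosen \<subseteq> Z" using chosen_spec(1) by blast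
  moreover have "range chosen \<approx> (UNIV :: (nat \<Rightarrow> bool) set)"
    using inj_on_image_eqpoll_self[OF inj_chosen] .
  ultimately show thesis using marczewski_null_range_chosen by (rule that)
qed

lemma large_preimage_if_not_marczewski_null:
  assumes "\<not> marczewski_null X"
  obtains e where "uniform_embedding e" "large_in_perfect_sets (e -` X)"
proof -
  from assms obtain P0 where P0: "perfect_set P0"
    and hit: "\<And>Q. perfect_set Q \<Longrightarrow> Q \<subseteq> P0 \<Longrightarrow> Q \<inter> X \<noteq> {}"
    unfolding marczewski_null_def by blast
  obtain e where e: "uniform_embedding e" "range e \<subseteq> P0"
    using perfect_set_embedding[OF P0] by metis
  have "\<not> small (R \<inter> e -` X)" if R: "perfect_set R" for R
  proof
    assume "small (R \<inter> e -` X)"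
    then have "small (e ` (R \<inter> e -` X))" by (rule small_image)
    with perfect_set_image_uniform_embedding[OF e(1) R]
    obtain Q where Q: "perfect_set Q" "Q \<subseteq> e ` R" "Q \<inter> e ` (R \<inter> e -` X) = {}"
      by (rule perfect_subset_avoiding_small) (rule that)
    have "Q \<inter> X = {}"
    proof (rule ccontr)
      assume "Q \<inter> X \<noteq> {}"
      then obtain q where "q \<in> Q" "q \<in> X" by blast
      moreover from \<open>q \<in> Q\<close> Q(2) obtain r where "r \<in> R" "q = e r" by blast
      ultimately have "q \<in> e ` (R \<inter> e -` X)" by blast
      with \<open>q \<in> Q\<close> Q(3) show False by blast
    qed
    moreover have "Q \<subseteq> P0" using Q(2) e(2) by blast
    ultimately show False using hit[OF Q(1)] by blast
  qed
  then have "large_in_perfect_sets (e -` X)" by (simp add: large_in_perfect_sets_def)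
  with e(1) show thesis by (rule that)
qed

theorem lemma2p3:
  fixes X :: "(nat \<Rightarrow> bool) set"
  assumes "X \<approx> (UNIV :: (nat \<Rightarrow> bool) set)"
  shows "\<exists>X'. X' \<subseteq> X \<and> X' \<approx> (UNIV :: (nat \<Rightarrow> bool) set) \<and> marczewski_null X'"
proof (cases "marczewski_null X")
  case True
  with assms show ?thesis by blast
next
  case False
  then obtain e where e: "uniform_embedding e"
    and large: "large_in_perfect_sets (e -` X)"
    by (rule large_preimage_if_not_marczewski_null) (rule that)
  obtain Z where Z: "Z \<subseteq> e -` X" "Z \<approx> (UNIV :: (nat \<Rightarrow> bool) set)" "marczewski_null Z"
    using large by (rule null_subset_if_large_in_perfect_sets) (rule that)
  have "e ` Z \<subseteq> X" using Z(1) by blast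
  moreover have "e ` Z \<approx> (UNIV :: (nat \<Rightarrow> bool) set)"
    using inj_on_image_eqpoll_self[OF inj_on_subset[OF uniform_embedding_inj[OF e] subset_UNIV]] Z(2)
    by (rule eqpoll_trans)
  moreover have "marczewski_null (e ` Z)"
    using e Z(3) by (rule marczewski_null_image_uniform_embedding)
  ultimately show ?thesis by blast
qed

end
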